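(* Assume the standing hypotheses (H). If $A$ is a part of $G$ with $|A|\ge 3$ and $\{u,v\}\subseteq A$ is a pair of distinct vertices maximizing $|L(u)\cap L(v)|$ over all such pairs in $A$, then $\{u,v\}$ is a good pair for $A$.
   Context: A list assignment $L$ assigns to each vertex $v$ a set $L(v)$ of colors; an $L$-coloring is a proper coloring $f$ with $f(v)\in L(v)$ for all $v$; $\mathrm{ch}$ denotes choice number and $\chi$ chromatic number. A part of a complete multipartite graph is one of its maximal stable sets. Standing hypotheses (H): $k\ge1$ and $n\ge 2k+2$ are integers; $G$ is a complete $k$-partite graph (exactly $k$ nonempty parts) on $n$ vertices; $L$ is a list assignment for $G$ with $|L(v)|\ge\lceil (n+k-1)/3\rceil$ for every vertex $v$; $G$ has no $L$-coloring; $\left|\bigcup_{v\in V(G)}L(v)\right|\le n-1$; and every graph $H$ with fewer than $n$ vertices satisfies $\mathrm{ch}(H)\le\max\{\chi(H),\lceil(|V(H)|+\chi(H)-1)/3\rceil\}$. For $i\in\{1,2,3,4\}$, $k_i$ denotes the number of parts of $G$ of size $i$. For a part $A$ with $|A|\ge3$, a pair $\{u,v\}\subseteq A$ of distinct vertices is a good pair for $A$ if either $|A|=3$ and $|L(u)\cap L(v)|\ge\frac{k_1+k_4+1}{3}$, or $|A|=4$ and $|L(u)\cap L(v)|\ge|L(w)\cap L(z)|$ where $\{w,z\}=A\setminus\{u,v\}$. *)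

theory Defs
  imports Complex_Main
begin

text \<open>Graphs are given by a finite vertex set V and an edge predicate E (only pairs in V matter).\<close>

definition simple_graph :: "'a set \<Rightarrow> ('a \<Rightarrow> 'a \<Rightarrow> bool) \<Rightarrow> bool" where
  "simple_graph V E \<longleftrightarrow> finite V \<and> (\<forall>x\<in>V. \<not> E x x) \<and> (\<forall>x\<in>V. \<forall>y\<in>V. E x y \<longrightarrow> E y x)"

definition stable_set :: "'a set \<Rightarrow> ('a \<Rightarrow> 'a \<Rightarrow> bool) \<Rightarrow> 'a set \<Rightarrow> bool" where
  "stable_set V E S \<longleftrightarrow> S \<subseteq> V \<and> (\<forall>x\<in>S. \<forall>y\<in>S. \<not> E x y)"

definition is_part :: "'a set \<Rightarrow> ('a \<Rightarrow> 'a \<Rightarrow> bool) \<Rightarrow> 'a set \<Rightarrow> bool" where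
  "is_part V E A \<longleftrightarrow> stable_set V E A \<and> (\<forall>S. stable_set V E S \<and> A \<subseteq> S \<longrightarrow> S = A)"

definition complete_multipartite :: "'a set \<Rightarrow> ('a \<Rightarrow> 'a \<Rightarrow> bool) \<Rightarrow> nat \<Rightarrow> bool" where
  "complete_multipartite V E k \<longleftrightarrow> finite V \<and>
     (\<exists>P. finite P \<and> card P = k \<and> \<Union>P = V \<and> (\<forall>B\<in>P. B \<noteq> {}) \<and>
          (\<forall>B\<in>P. \<forall>C\<in>P. B \<noteq> C \<longrightarrow> B \<inter> C = {}) \<and>
          (\<forall>x\<in>V. \<forall>y\<in>V. E x y \<longleftrightarrow> \<not> (\<exists>B\<in>P. x \<in> B \<and> y \<in> B)))"

definition proper_coloring :: "'a set \<Rightarrow> ('a \<Rightarrow> 'a \<Rightarrow> bool) \<Rightarrow> ('a \<Rightarrow> 'c) \<Rightarrow> bool" where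
  "proper_coloring V E f \<longleftrightarrow> (\<forall>x\<in>V. \<forall>y\<in>V. E x y \<longrightarrow> f x \<noteq> f y)"

definition L_coloring :: "'a set \<Rightarrow> ('a \<Rightarrow> 'a \<Rightarrow> bool) \<Rightarrow> ('a \<Rightarrow> 'c set) \<Rightarrow> ('a \<Rightarrow> 'c) \<Rightarrow> bool" where
  "L_coloring V E L f \<longleftrightarrow> proper_coloring V E f \<and> (\<forall>v\<in>V. f v \<in> L v)"

text \<open>k-choosability (colours drawn from the infinite type nat; lists are finite sets).\<close>
definition choosable :: "'a set \<Rightarrow> ('a \<Rightarrow> 'a \<Rightarrow> bool) \<Rightarrow> nat \<Rightarrow> bool" where
  "choosable V E k \<longleftrightarrow> (\<forall>L :: 'a \<Rightarrow> nat set. (\<forall>v\<in>V. finite (L v) \<and> card (L v) \<ge> k) \<longrightarrow>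
                          (\<exists>f. L_coloring V E L f))"

definition choice_number :: "'a set \<Rightarrow> ('a \<Rightarrow> 'a \<Rightarrow> bool) \<Rightarrow> nat" where
  "choice_number V E = (LEAST k. choosable V E k)"

definition chromatic_number :: "'a set \<Rightarrow> ('a \<Rightarrow> 'a \<Rightarrow> bool) \<Rightarrow> nat" where
  "chromatic_number V E = (LEAST k. \<exists>f :: 'a \<Rightarrow> nat. proper_coloring V E f \<and> f ` V \<subseteq> {..<k})"

definition num_parts_of_size :: "'a set \<Rightarrow> ('a \<Rightarrow> 'a \<Rightarrow> bool) \<Rightarrow> nat \<Rightarrow> nat" where
  "num_parts_of_size V E i = card {A. is_part V E A \<and> card A = i}"

definition good_pair :: "'a set \<Rightarrow> ('a \<Rightarrow> 'a \<Rightarrow> bool) \<Rightarrow> ('a \<Rightarrow> 'c set) \<Rightarrow> 'a set \<Rightarrow> 'a \<Rightarrow> 'a \<Rightarrow> bool" where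
  "good_pair V E L A u v \<longleftrightarrow> u \<in> A \<and> v \<in> A \<and> u \<noteq> v \<and>
     ((card A = 3 \<and> real (card (L u \<inter> L v)) \<ge>
         (real (num_parts_of_size V E 1) + real (num_parts_of_size V E 4) + 1) / 3)
    \<or> (card A = 4 \<and> (\<forall>w z. A - {u, v} = {w, z} \<longrightarrow> card (L u \<inter> L v) \<ge> card (L w \<inter> L z))))"

end

theory Submission
  imports Defs
begin

text \<open>Let \<open>m = \<lceil>(n + k - 1) / 3\<rceil>\<close>. No color \<open>c\<close> lies in the lists of three vertices of one
  part: otherwise color those three vertices with \<open>c\<close> and the remaining \<open>n - 3\<close> vertices, which
  still form a graph with at most \<open>k\<close> parts, from their lists minus \<open>c\<close>; by the bound for
  smaller graphs this succeeds, so \<open>G\<close> would be \<open>L\<close>-colorable. Double counting pairs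
  (vertex, color in its list) against the at most \<open>n - 1\<close> colors then gives
  \<open>nm \<le> 2k(n - 1)\<close>, hence \<open>m < 2k\<close>, and \<open>|A| m \<le> 2(n - 1)\<close>, hence \<open>|A| \<le> 4\<close>.
  For \<open>|A| = 4\<close> a maximizing pair is trivially good. For \<open>|A| = 3\<close> inclusion-exclusion on the
  three lists gives \<open>3 |L(u) \<inter> L(v)| \<ge> 3m - (n - 1) \<ge> k\<close>, and \<open>k > k\<^sub>1 + k\<^sub>4\<close>
  because \<open>A\<close> itself is a part of size 3.\<close>

section \<open>Choosability\<close>

lemma inj_choice_from_large_lists:
  assumes "finite W" "\<forall>v\<in>W. finite (L v) \<and> card W \<le> card (L v)"
  obtains f where "\<forall>v\<in>W. f v \<in> L v" "inj_on f W"
  using assms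
proof (induction W arbitrary: thesis rule: finite_induct)
  case empty
  then show ?case by simp
next
  case (insert x W)
  have large: "\<forall>v\<in>insert x W. finite (L v) \<and> Suc (card W) \<le> card (L v)"
    using insert.prems(2) insert.hyps by simp
  then have "\<forall>v\<in>W. finite (L v) \<and> card W \<le> card (L v)" by auto
  then obtain f where f: "\<forall>v\<in>W. f v \<in> L v" "inj_on f W"
    using insert.IH by blast
  have "card (f ` W) < card (L x)"
    using card_image_le[OF insert.hyps(1), of f] large by auto
  then have "\<not> L x \<subseteq> f ` W"
    using card_mono[OF finite_imageI[OF insert.hyps(1)]] leD by blast
  then obtain c where c: "c \<in> L x" "c \<notin> f ` W" by blast
  show ?case
    by (rule insert.prems(1)[of "f(x := c)"])
      (use f c insert.hyps(2) in \<open>auto simp: inj_on_def\<close>)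
qed

lemma choosable_card:
  assumes "finite W" "\<forall>x\<in>W. \<not> F x x"
  shows "choosable W F (card W)"
  unfolding choosable_def L_coloring_def proper_coloring_def
proof (intro allI impI)
  fix L :: "'a \<Rightarrow> nat set"
  assume "\<forall>v\<in>W. finite (L v) \<and> card W \<le> card (L v)"
  then obtain f where "\<forall>v\<in>W. f v \<in> L v" "inj_on f W"
    using inj_choice_from_large_lists[OF assms(1)] by blast
  moreover have "\<forall>x\<in>W. \<forall>y\<in>W. F x y \<longrightarrow> f x \<noteq> f y"
    using \<open>inj_on f W\<close> assms(2) unfolding inj_on_def by blast
  ultimately show "\<exists>f. (\<forall>x\<in>W. \<forall>y\<in>W. F x y \<longrightarrow> f x \<noteq> f y) \<and> (\<forall>v\<in>W. f v \<in> L v)"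
    by blast
qed

lemma choosable_mono:
  assumes "choosable W F a" "a \<le> b"
  shows "choosable W F b"
  using assms unfolding choosable_def by (meson le_trans)

lemma choosable_of_choice_number_le:
  assumes "finite W" "\<forall>x\<in>W. \<not> F x x" "choice_number W F \<le> b"
  shows "choosable W F b"
proof -
  have "choosable W F (choice_number W F)"
    unfolding choice_number_def using choosable_card[of W F] assms(1,2) by (blast intro: LeastI)
  then show ?thesis using choosable_mono assms(3) by blast
qed

lemma chromatic_number_le:
  assumes "proper_coloring W F (g :: 'a \<Rightarrow> nat)" "g ` W \<subseteq> {..<k}"
  shows "chromatic_number W F \<le> k"
  unfolding chromatic_number_def using assms by (blast intro: Least_le)

definition image_graph :: "('a \<Rightarrow> 'b) \<Rightarrow> 'a set \<Rightarrow> ('a \<Rightarrow> 'a \<Rightarrow> bool) \<Rightarrow> 'b \<Rightarrow> 'b \<Rightarrow> bool" where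
  "image_graph h V E i j \<longleftrightarrow> (\<exists>x\<in>V. \<exists>y\<in>V. h x = i \<and> h y = j \<and> E x y)"

lemma simple_graph_image_graph:
  assumes "finite V" "inj_on h V" "\<forall>x\<in>V. \<not> E x x" "\<forall>x\<in>V. \<forall>y\<in>V. E x y \<longrightarrow> E y x"
  shows "simple_graph (h ` V) (image_graph h V E)"
  unfolding simple_graph_def
proof (intro conjI ballI impI)
  fix i assume "i \<in> h ` V"
  show "\<not> image_graph h V E i i"
    using assms(2,3) unfolding image_graph_def by (auto dest: inj_onD)
next
  fix i j assume "image_graph h V E i j"
  then show "image_graph h V E j i"
    using assms(4) unfolding image_graph_def by blast
qed (use assms(1) in simp)

lemma proper_coloring_image_graph:
  assumes "inj_on h V" "proper_coloring V E g"
  shows "proper_coloring (h ` V) (image_graph h V E) (g \<circ> inv_into V h)"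
  using assms unfolding proper_coloring_def image_graph_def by (auto simp: inj_on_eq_iff)

lemma L_coloring_of_choosable_image_graph:
  fixes h :: "'a \<Rightarrow> nat" and L :: "'a \<Rightarrow> 'c set"
  assumes fin: "finite V" and inj: "inj_on h V"
    and ch: "choosable (h ` V) (image_graph h V E) b"
    and lists: "\<forall>x\<in>V. finite (L x) \<and> b \<le> card (L x)"
  shows "\<exists>f. L_coloring V E L f"
proof -
  \<comment> \<open>\<open>choosable\<close> only speaks about lists of naturals, so the colors are renamed injectively\<close>
  let ?U = "\<Union>x\<in>V. L x"
  have fin_U: "finite ?U" using fin lists by simp
  obtain \<phi> :: "'c \<Rightarrow> nat" where \<phi>: "inj_on \<phi> ?U"
    using finite_imp_inj_to_nat_seg[OF fin_U] by blast
  define L' where "L' i = \<phi> ` L (inv_into V h i)" for i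
  have L'h: "L' (h x) = \<phi> ` L x" if "x \<in> V" for x
    using inv_into_f_f[OF inj that] L'_def by simp
  have "\<forall>i\<in>h ` V. finite (L' i) \<and> b \<le> card (L' i)"
  proof
    fix i assume "i \<in> h ` V"
    then obtain x where x: "x \<in> V" "i = h x" by blast
    have "inj_on \<phi> (L x)" using \<phi> by (rule inj_on_subset) (use x(1) in auto)
    then show "finite (L' i) \<and> b \<le> card (L' i)"
      using lists x L'h by (simp add: card_image)
  qed
  then obtain f' where f': "L_coloring (h ` V) (image_graph h V E) L' f'"
    using ch[unfolded choosable_def, rule_format, of L'] by blast
  have f'_in: "f' (h x) \<in> \<phi> ` L x" if "x \<in> V" for x
  proof -
    have "f' (h x) \<in> L' (h x)" using f' that unfolding L_coloring_def by blast
    then show ?thesis using L'h[OF that] by simp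
  qed
  define f where "f x = inv_into ?U \<phi> (f' (h x))" for x
  have \<phi>f: "\<phi> (f x) = f' (h x)" "f x \<in> L x" if x: "x \<in> V" for x
  proof -
    obtain c where c: "c \<in> L x" "f' (h x) = \<phi> c" using f'_in[OF x] by blast
    then have "c \<in> ?U" using x by blast
    then show "\<phi> (f x) = f' (h x)" "f x \<in> L x"
      using c \<phi> unfolding f_def by (simp_all add: inv_into_f_f)
  qed
  have "L_coloring V E L f"
    unfolding L_coloring_def proper_coloring_def
  proof (intro conjI ballI impI)
    fix x y assume "x \<in> V" "y \<in> V" "E x y"
    then have "f' (h x) \<noteq> f' (h y)"
      using f' unfolding L_coloring_def proper_coloring_def image_graph_def by blast
    then show "f x \<noteq> f y" using \<phi>f(1)[OF \<open>x \<in> V\<close>] \<phi>f(1)[OF \<open>y \<in> V\<close>] by auto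
  next
    fix x assume "x \<in> V"
    then show "f x \<in> L x" by (rule \<phi>f(2))
  qed
  then show ?thesis by blast
qed

text \<open>The induction hypothesis of the paper: the bound
  \<open>ch(H) \<le> max{\<chi>(H), \<lceil>(|V(H)| + \<chi>(H) - 1) / 3\<rceil>}\<close> for all graphs on fewer than \<open>n\<close>
  vertices. Graphs on subsets of \<open>nat\<close> suffice, since every finite graph has a copy there.\<close>
definition choice_bound_below :: "nat \<Rightarrow> bool" where
  "choice_bound_below n \<longleftrightarrow> (\<forall>(W :: nat set) F. simple_graph W F \<and> card W < n \<longrightarrow>
     int (choice_number W F) \<le> max (int (chromatic_number W F))
        \<lceil>(real (card W) + real (chromatic_number W F) - 1) / 3\<rceil>)"

lemma L_coloring_by_choice_bound:
  fixes g :: "'a \<Rightarrow> nat" and L :: "'a \<Rightarrow> 'c set"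
  assumes bound: "choice_bound_below n" and "card V < n" and fin: "finite V"
    and irrefl: "\<forall>x\<in>V. \<not> E x x" and sym: "\<forall>x\<in>V. \<forall>y\<in>V. E x y \<longrightarrow> E y x"
    and g: "proper_coloring V E g" "g ` V \<subseteq> {..<k}"
    and b: "k \<le> b" "card V + k \<le> 3 * b + 1"
    and lists: "\<forall>x\<in>V. finite (L x) \<and> b \<le> card (L x)"
  shows "\<exists>f. L_coloring V E L f"
proof -
  obtain h :: "'a \<Rightarrow> nat" where h: "inj_on h V"
    using finite_imp_inj_to_nat_seg[OF fin] by blast
  let ?W = "h ` V" and ?F = "image_graph h V E"
  have simple: "simple_graph ?W ?F"
    using simple_graph_image_graph[OF fin h irrefl sym] .
  have card_W: "card ?W = card V" using h by (simp add: card_image)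
  have "(g \<circ> inv_into V h) ` ?W \<subseteq> {..<k}"
    using g(2) h by (auto simp: inv_into_f_f)
  then have \<chi>: "chromatic_number ?W ?F \<le> k"
    by (rule chromatic_number_le[OF proper_coloring_image_graph[OF h g(1)]])
  have "real (card ?W + chromatic_number ?W ?F) \<le> real (3 * b + 1)"
    using \<chi> card_W b(2) by (simp only: of_nat_le_iff)
  then have "\<lceil>(real (card ?W) + real (chromatic_number ?W ?F) - 1) / 3\<rceil> \<le> int b"
    by (intro ceiling_le) simp
  moreover have "int (choice_number ?W ?F) \<le> max (int (chromatic_number ?W ?F))
      \<lceil>(real (card ?W) + real (chromatic_number ?W ?F) - 1) / 3\<rceil>"
  proof -
    have "card ?W < n" using card_W \<open>card V < n\<close> by simp
    then show ?thesis
      using bound[unfolded choice_bound_below_def, rule_format, OF conjI[OF simple]] by blast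
  qed
  ultimately have "choice_number ?W ?F \<le> b"
    using \<chi> b by linarith
  then have "choosable ?W ?F b"
    using simple unfolding simple_graph_def by (blast intro: choosable_of_choice_number_le)
  then show ?thesis
    by (rule L_coloring_of_choosable_image_graph[OF fin h _ lists])
qed

section \<open>Complete multipartite graphs\<close>

locale complete_multipartition =
  fixes V :: "'a set" and E :: "'a \<Rightarrow> 'a \<Rightarrow> bool" and P :: "'a set set"
  assumes finite_V: "finite V"
    and Union_P: "\<Union>P = V"
    and disjoint_P: "\<And>B C. B \<in> P \<Longrightarrow> C \<in> P \<Longrightarrow> B \<noteq> C \<Longrightarrow> B \<inter> C = {}"
    and adjacent_iff: "\<And>x y. x \<in> V \<Longrightarrow> y \<in> V \<Longrightarrow> E x y \<longleftrightarrow> \<not> (\<exists>B\<in>P. x \<in> B \<and> y \<in> B)"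

lemma complete_multipartite_imp_partition:
  assumes "complete_multipartite V E k"
  obtains P where "complete_multipartition V E P" "card P = k"
proof -
  obtain P where P: "card P = k" "\<Union>P = V" "\<forall>B\<in>P. \<forall>C\<in>P. B \<noteq> C \<longrightarrow> B \<inter> C = {}"
    "\<forall>x\<in>V. \<forall>y\<in>V. E x y \<longleftrightarrow> \<not> (\<exists>B\<in>P. x \<in> B \<and> y \<in> B)"
    and "finite V"
    using assms unfolding complete_multipartite_def by auto
  then have "complete_multipartition V E P"
    by unfold_locales auto
  then show ?thesis using that P(1) by blast
qed

context complete_multipartition
begin

lemma part_subset: "B \<in> P \<Longrightarrow> B \<subseteq> V"
  using Union_P by blast

lemma finite_P: "finite P"
proof (rule finite_subset)
  show "P \<subseteq> Pow V" using part_subset by blast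
qed (simp add: finite_V)

lemma not_adjacent_in_part: "B \<in> P \<Longrightarrow> x \<in> B \<Longrightarrow> y \<in> B \<Longrightarrow> \<not> E x y"
  using adjacent_iff[of x y] part_subset by blast

lemma irreflexive: "\<forall>x\<in>V. \<not> E x x"
proof
  fix x assume "x \<in> V"
  then obtain B where "B \<in> P" "x \<in> B" using Union_P by blast
  then show "\<not> E x x" using not_adjacent_in_part by blast
qed

lemma symmetric: "\<forall>x\<in>V. \<forall>y\<in>V. E x y \<longrightarrow> E y x"
  by (simp add: adjacent_iff) blast

lemma stable_set_part: "B \<in> P \<Longrightarrow> stable_set V E B"
  unfolding stable_set_def using part_subset not_adjacent_in_part by blast

lemma part_unique: "B \<in> P \<Longrightarrow> C \<in> P \<Longrightarrow> x \<in> B \<Longrightarrow> x \<in> C \<Longrightarrow> B = C"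
  using disjoint_P by blast

lemma is_part_imp_mem_P:
  assumes "V \<noteq> {}" "is_part V E A"
  shows "A \<in> P"
proof -
  have stable: "stable_set V E A" and maximal: "\<And>S. stable_set V E S \<Longrightarrow> A \<subseteq> S \<Longrightarrow> S = A"
    using assms(2) unfolding is_part_def by auto
  obtain x where x: "x \<in> V" "A \<subseteq> V" "A \<noteq> {} \<longrightarrow> x \<in> A"
    using assms(1) stable unfolding stable_set_def by blast
  then obtain B where B: "B \<in> P" "x \<in> B" using Union_P by blast
  have "A \<subseteq> B"
  proof
    fix y assume "y \<in> A"
    then have "x \<in> A" "y \<in> V" "\<not> E x y" using x stable unfolding stable_set_def by blast+
    then obtain C where "C \<in> P" "x \<in> C" "y \<in> C" using adjacent_iff x(1) by blast
    then show "y \<in> B" using part_unique B by blast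
  qed
  then have "B = A" using maximal stable_set_part B(1) by blast
  then show ?thesis using B(1) by simp
qed

lemma proper_coloring_by_parts:
  obtains f :: "'a \<Rightarrow> nat" where "proper_coloring V E f" "f ` V \<subseteq> {..<card P}"
proof -
  obtain \<beta> where \<beta>: "bij_betw \<beta> P {0..<card P}"
    using ex_bij_betw_finite_nat[OF finite_P] by blast
  define part where "part x = (THE B. B \<in> P \<and> x \<in> B)" for x
  have part: "part x \<in> P \<and> x \<in> part x" if x: "x \<in> V" for x
  proof -
    obtain B where "B \<in> P" "x \<in> B" using x Union_P by blast
    then have "\<exists>!B. B \<in> P \<and> x \<in> B" using part_unique by blast
    then show ?thesis unfolding part_def by (rule theI')
  qed
  show ?thesis
  proof
    show "proper_coloring V E (\<beta> \<circ> part)"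
      unfolding proper_coloring_def
    proof (intro ballI impI)
      fix x y assume "x \<in> V" "y \<in> V" "E x y"
      then have "part x \<noteq> part y" using part not_adjacent_in_part by metis
      then show "(\<beta> \<circ> part) x \<noteq> (\<beta> \<circ> part) y"
        using \<beta> part[OF \<open>x \<in> V\<close>] part[OF \<open>y \<in> V\<close>] by (auto simp: bij_betw_def dest: inj_onD)
    qed
    show "(\<beta> \<circ> part) ` V \<subseteq> {..<card P}"
      using \<beta> part by (auto simp: bij_betw_def)
  qed
qed

lemma card_common_color_le:
  assumes "\<And>B. B \<in> P \<Longrightarrow> card {x\<in>B. c \<in> L x} \<le> d"
  shows "card {x\<in>V. c \<in> L x} \<le> d * card P"
proof -
  have "{x\<in>V. c \<in> L x} = (\<Union>B\<in>P. {x\<in>B. c \<in> L x})" using Union_P by blast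
  then have "card {x\<in>V. c \<in> L x} \<le> (\<Sum>B\<in>P. card {x\<in>B. c \<in> L x})"
    by (simp add: card_UN_le finite_P)
  also have "\<dots> \<le> (\<Sum>B\<in>P. d)" by (rule sum_mono) (rule assms)
  finally show ?thesis by (simp add: mult.commute)
qed

lemma num_parts_of_size_add_less:
  assumes "V \<noteq> {}" "is_part V E A" "card A \<noteq> i" "card A \<noteq> j" "i \<noteq> j"
  shows "num_parts_of_size V E i + num_parts_of_size V E j < card P"
proof -
  let ?S = "\<lambda>i. {B. is_part V E B \<and> card B = i}"
  have sub: "?S i \<union> ?S j \<subseteq> P - {A}"
    using is_part_imp_mem_P[OF assms(1)] assms(3,4) by auto
  then have "finite (?S i)" "finite (?S j)"
    using finite_P by (auto intro: finite_subset)
  then have "num_parts_of_size V E i + num_parts_of_size V E j = card (?S i \<union> ?S j)"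
    unfolding num_parts_of_size_def using assms(5) by (subst card_Un_disjoint) auto
  also have "\<dots> \<le> card (P - {A})" using sub finite_P by (intro card_mono) auto
  also have "\<dots> < card P"
    by (rule card_Diff1_less[OF finite_P is_part_imp_mem_P[OF assms(1,2)]])
  finally show ?thesis .
qed

end

lemma L_coloring_extend_by_common_color:
  assumes "stable_set V E S" "\<forall>x\<in>S. c \<in> L x" "L_coloring (V - S) E (\<lambda>x. L x - {c}) f"
  shows "L_coloring V E L (\<lambda>x. if x \<in> S then c else f x)"
  using assms unfolding L_coloring_def proper_coloring_def stable_set_def by auto

lemma (in complete_multipartition) card_common_color_in_part_le_2:
  assumes noncol: "\<nexists>f. L_coloring V E L f"
    and bound: "choice_bound_below (card V)"
    and lists: "\<forall>x\<in>V. finite (L x) \<and> b \<le> card (L x)"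
    and b: "card P < b" "card V + card P \<le> 3 * b + 1"
    and B: "B \<in> P"
  shows "card {x\<in>B. c \<in> L x} \<le> 2"
proof (rule ccontr)
  assume "\<not> ?thesis"
  then have "3 \<le> card {x\<in>B. c \<in> L x}" by simp
  then obtain S where S: "S \<subseteq> {x\<in>B. c \<in> L x}" "card S = 3" "finite S"
    by (rule obtain_subset_with_card_n)
  have SV: "S \<subseteq> V" using S(1) part_subset[OF B] by blast
  have card_V_S: "card (V - S) = card V - 3" "3 \<le> card V"
    using S(2,3) SV card_mono[OF finite_V SV] by (simp_all add: card_Diff_subset)
  obtain g :: "'a \<Rightarrow> nat" where g: "proper_coloring V E g" "g ` V \<subseteq> {..<card P}"
    by (rule proper_coloring_by_parts)
  have "\<exists>f. L_coloring (V - S) E (\<lambda>x. L x - {c}) f"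
  proof (rule L_coloring_by_choice_bound[OF bound])
    show "card (V - S) < card V" using card_V_S by simp
    show "proper_coloring (V - S) E g" using g(1) unfolding proper_coloring_def by blast
    show "\<forall>x\<in>V - S. finite (L x - {c}) \<and> b - 1 \<le> card (L x - {c})"
      using lists by (auto simp: card_Diff_singleton_if)
  qed (use finite_V irreflexive symmetric g(2) b card_V_S in auto)
  then obtain f where "L_coloring (V - S) E (\<lambda>x. L x - {c}) f" by blast
  moreover have "stable_set V E S"
    using stable_set_part[OF B] S(1) SV unfolding stable_set_def by blast
  ultimately have "L_coloring V E L (\<lambda>x. if x \<in> S then c else f x)"
    using S(1) by (intro L_coloring_extend_by_common_color) auto
  with noncol show False by blast
qed

section \<open>Counting list colors\<close>

lemma card_mult_le_card_Union_lists:
  assumes "finite X" "\<forall>v\<in>X. finite (L v) \<and> m \<le> card (L v)"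
    and "\<And>c. card {v\<in>X. c \<in> L v} \<le> d"
  shows "card X * m \<le> card (\<Union>v\<in>X. L v) * d"
proof -
  let ?U = "\<Union>v\<in>X. L v"
  have "card X * m \<le> (\<Sum>v\<in>X. card (L v))"
    using assms(2) sum_bounded_below[of X m "\<lambda>v. card (L v)"] by simp
  also have "\<dots> = (\<Sum>v\<in>X. card {c\<in>?U. c \<in> L v})"
  proof (rule sum.cong)
    fix v assume "v \<in> X"
    then have "{c\<in>?U. c \<in> L v} = L v" by blast
    then show "card (L v) = card {c\<in>?U. c \<in> L v}" by simp
  qed simp
  also have "\<dots> = (\<Sum>c\<in>?U. card {v\<in>X. c \<in> L v})"
    using assms(1,2) by (intro sum_multicount_gen) auto
  also have "\<dots> \<le> (\<Sum>c\<in>?U. d)" by (intro sum_mono assms(3))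
  finally show ?thesis by simp
qed

lemma card_three_lists_le:
  assumes "card A = 3" "\<forall>w\<in>A. finite (L w) \<and> m \<le> card (L w)"
    and "\<forall>w\<in>A. \<forall>w'\<in>A. w \<noteq> w' \<longrightarrow> card (L w \<inter> L w') \<le> M"
  shows "3 * m \<le> card (\<Union>w\<in>A. L w) + 3 * M"
proof -
  obtain x y z where A: "A = {x, y, z}" "x \<noteq> y" "y \<noteq> z" "x \<noteq> z"
    using card_3_iff[THEN iffD1, OF assms(1)] by blast
  have fin: "finite (L x)" "finite (L y)" "finite (L z)" using assms(2) A(1) by auto
  have "card (L x) + card (L y) = card (L x \<union> L y) + card (L x \<inter> L y)"
    using fin by (intro card_Un_Int)
  moreover have "card (L x \<union> L y) + card (L z) = card (L x \<union> L y \<union> L z) + card ((L x \<union> L y) \<inter> L z)"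
    using fin by (intro card_Un_Int) auto
  moreover have "card ((L x \<union> L y) \<inter> L z) \<le> card (L x \<inter> L z) + card (L y \<inter> L z)"
    unfolding Int_Un_distrib2 by (rule card_Un_le)
  moreover have "card (L x \<inter> L y) \<le> M" "card (L x \<inter> L z) \<le> M" "card (L y \<inter> L z) \<le> M"
    using assms(3) A by auto
  moreover have "m \<le> card (L x)" "m \<le> card (L y)" "m \<le> card (L z)"
    using assms(2) A(1) by auto
  ultimately have "3 * m \<le> card (L x \<union> L y \<union> L z) + 3 * M" by linarith
  moreover have "(\<Union>w\<in>A. L w) = L x \<union> L y \<union> L z" using A(1) by auto
  ultimately show ?thesis by simp
qed

lemma good_pair_of_card_eq_4:
  assumes "card A = 4" "u \<in> A" "v \<in> A" "u \<noteq> v"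
    and "\<forall>x\<in>A. \<forall>y\<in>A. x \<noteq> y \<longrightarrow> card (L x \<inter> L y) \<le> card (L u \<inter> L v)"
  shows "good_pair V E L A u v"
proof -
  have "finite A" using assms(1) by (metis card.infinite zero_neq_numeral)
  then have two: "card (A - {u, v}) = 2"
    using assms(1-4) by (simp add: card_Diff_subset)
  have "card (L w \<inter> L z) \<le> card (L u \<inter> L v)" if wz: "A - {u, v} = {w, z}" for w z
  proof -
    have "w \<noteq> z"
    proof
      assume "w = z"
      then have "card (A - {u, v}) = 1" using wz by simp
      with two show False by simp
    qed
    moreover have "w \<in> A" "z \<in> A" using wz by auto
    ultimately show ?thesis using assms(5) by blast
  qed
  then show ?thesis unfolding good_pair_def using assms(1-4) by blast
qed

lemma card_UN_mono:
  assumes "finite V" "\<forall>x\<in>V. finite (L x)" "A \<subseteq> V"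
  shows "card (\<Union>x\<in>A. L x) \<le> card (\<Union>x\<in>V. L x)"
  using assms by (intro card_mono) auto

lemma le_4_of_color_counts:
  fixes a n m k N :: nat
  assumes "n * m \<le> N * (2 * k)" "a * m \<le> N * 2" "N < n" "n + k \<le> 3 * m + 1" "1 \<le> k"
  shows "a \<le> 4"
proof -
  have "m < 2 * k"
  proof (rule ccontr)
    assume "\<not> m < 2 * k"
    then have "n * (2 * k) \<le> n * m" by simp
    moreover have "N * (2 * k) < n * (2 * k)" using assms(3,5) by simp
    ultimately show False using assms(1) by linarith
  qed
  show "a \<le> 4"
  proof (rule ccontr)
    assume "\<not> a \<le> 4"
    then have "5 * m \<le> a * m" by simp
    with assms(2-4) \<open>m < 2 * k\<close> show False by linarith
  qed
qed

context complete_multipartition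
begin

lemma card_part_le_4:
  assumes lists: "\<forall>x\<in>V. finite (L x) \<and> m \<le> card (L x)"
    and two: "\<And>B c. B \<in> P \<Longrightarrow> card {x\<in>B. c \<in> L x} \<le> 2"
    and colors: "card (\<Union>x\<in>V. L x) < card V" and m: "card V + card P \<le> 3 * m + 1"
    and "P \<noteq> {}" and A: "A \<in> P"
  shows "card A \<le> 4"
proof (rule le_4_of_color_counts[OF _ _ colors m])
  show "card V * m \<le> card (\<Union>x\<in>V. L x) * (2 * card P)"
    using card_mult_le_card_Union_lists[OF finite_V lists] card_common_color_le[OF two] by blast
  have AV: "A \<subseteq> V" using part_subset[OF A] .
  have "card A * m \<le> card (\<Union>x\<in>A. L x) * 2"
    using card_mult_le_card_Union_lists[of A L m 2] finite_subset[OF AV finite_V] lists AV two[OF A]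
    by blast
  moreover have "card (\<Union>x\<in>A. L x) \<le> card (\<Union>x\<in>V. L x)"
    using card_UN_mono[OF finite_V _ AV, of L] lists by simp
  ultimately show "card A * m \<le> card (\<Union>x\<in>V. L x) * 2" by linarith
  show "1 \<le> card P" using \<open>P \<noteq> {}\<close> finite_P by (simp add: Suc_le_eq card_gt_0_iff)
qed

lemma good_pair_of_card_eq_3:
  assumes "V \<noteq> {}" "is_part V E A" "card A = 3" "u \<in> A" "v \<in> A" "u \<noteq> v"
    and maxpair: "\<forall>x\<in>A. \<forall>y\<in>A. x \<noteq> y \<longrightarrow> card (L x \<inter> L y) \<le> card (L u \<inter> L v)"
    and lists: "\<forall>x\<in>V. finite (L x) \<and> m \<le> card (L x)"
    and colors: "card (\<Union>x\<in>V. L x) < card V" and m: "card V + card P \<le> 3 * m + 1"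
  shows "good_pair V E L A u v"
proof -
  have AV: "A \<subseteq> V" using part_subset is_part_imp_mem_P[OF assms(1,2)] by blast
  have "3 * m \<le> card (\<Union>w\<in>A. L w) + 3 * card (L u \<inter> L v)"
    using card_three_lists_le[OF assms(3)] lists AV maxpair by blast
  moreover have "card (\<Union>w\<in>A. L w) \<le> card (\<Union>x\<in>V. L x)"
    using card_UN_mono[OF finite_V _ AV, of L] lists by simp
  moreover have "num_parts_of_size V E 1 + num_parts_of_size V E 4 < card P"
    using num_parts_of_size_add_less[OF assms(1,2)] assms(3) by simp
  ultimately have "num_parts_of_size V E 1 + num_parts_of_size V E 4 + 1 \<le> 3 * card (L u \<inter> L v)"
    using colors m by linarith
  then show ?thesis unfolding good_pair_def using assms(3-6) by simp
qed

end

theorem corollary22: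
  fixes V :: "'a set" and E :: "'a \<Rightarrow> 'a \<Rightarrow> bool" and L :: "'a \<Rightarrow> 'c set"
    and k n :: nat and A :: "'a set" and u v :: 'a
  assumes k: "k \<ge> 1" and n: "n \<ge> 2 * k + 2"
    and G: "complete_multipartite V E k" and cardV: "card V = n"
    and lists: "\<forall>x\<in>V. card (L x) \<ge> nat \<lceil>real (n + k - 1) / 3\<rceil>"
    and noncol: "\<not> (\<exists>f. L_coloring V E L f)"
    and colors: "card (\<Union>x\<in>V. L x) \<le> n - 1"
    and minimal: "\<forall>(W :: nat set) F. simple_graph W F \<and> card W < n \<longrightarrow>
         int (choice_number W F) \<le> max (int (chromatic_number W F))
            \<lceil>(real (card W) + real (chromatic_number W F) - 1) / 3\<rceil>"
    and A: "is_part V E A" and A3: "card A \<ge> 3"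
    and uv: "u \<in> A" "v \<in> A" "u \<noteq> v"
    and maxpair: "\<forall>x\<in>A. \<forall>y\<in>A. x \<noteq> y \<longrightarrow> card (L x \<inter> L y) \<le> card (L u \<inter> L v)"
  shows "good_pair V E L A u v"
proof -
  obtain P where "complete_multipartition V E P" and card_P: "card P = k"
    using G by (rule complete_multipartite_imp_partition)
  interpret complete_multipartition V E P by fact
  define m where "m = nat \<lceil>real (n + k - 1) / 3\<rceil>"
  have m: "n + k \<le> 3 * m + 1" "k < m"
    using n unfolding m_def by linarith+
  have lists_m: "\<forall>x\<in>V. finite (L x) \<and> m \<le> card (L x)"
  proof
    fix x assume "x \<in> V"
    then have "m \<le> card (L x)" using lists unfolding m_def by blast
    then show "finite (L x) \<and> m \<le> card (L x)" using m(2) card_ge_0_finite[of "L x"] by auto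
  qed
  have two: "card {x\<in>B. c \<in> L x} \<le> 2" if "B \<in> P" for B c
    by (rule card_common_color_in_part_le_2[OF noncol _ lists_m])
      (use minimal that m cardV card_P in \<open>auto simp: choice_bound_below_def\<close>)
  have V_ne: "V \<noteq> {}" and fewer_colors: "card (\<Union>x\<in>V. L x) < card V"
    using cardV colors n by auto
  have "card A \<le> 4"
    using card_part_le_4[OF lists_m two fewer_colors] m(1) k cardV card_P is_part_imp_mem_P[OF V_ne A]
    by fastforce
  with A3 consider "card A = 3" | "card A = 4" by linarith
  then show ?thesis
  proof cases
    case 1
    show ?thesis
      by (rule good_pair_of_card_eq_3[OF V_ne A 1 uv maxpair lists_m fewer_colors])
        (use m cardV card_P in simp)
  next
    case 2
    show ?thesis by (rule good_pair_of_card_eq_4[OF 2 uv maxpair])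
  qed
qed

end
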